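(* Let $\mathfrak L$ be a color gLt-algebra admitting a multiplicative basis $\mathfrak B=\{e_i\}_{i\in I}$. Then $\mathfrak L=\bigoplus_{[i]\in I/\sim}\mathfrak J_{[i]}$, where each $\mathfrak J_{[i]}$ is a color gLt-ideal of $\mathfrak L$ admitting a multiplicative basis inherited by the one of $\mathfrak L$ (namely $\{e_j\}_{j\in[i]}$).
   Context: Let $\mathbb F$ be a field, $\mathbb G$ an abelian group, $n\ge 2$, and $\epsilon:\mathbb G\times\mathbb G\to\mathbb F\setminus\{0\}$ a bicharacter ($\epsilon(k,g+h)=\epsilon(k,g)\epsilon(k,h)$, $\epsilon(g+h,k)=\epsilon(g,k)\epsilon(h,k)$, $\epsilon(g,h)\epsilon(h,g)=1$). A graded $n$-ary algebra is a $\mathbb G$-graded vector space $\mathfrak L=\bigoplus_{g\in\mathbb G}\mathfrak L_g$ with an $n$-linear map $\langle\cdot,\dots,\cdot\rangle:\mathfrak L^n\to\mathfrak L$ such that $\langle\mathfrak L_{g_1},\dots,\mathfrak L_{g_n}\rangle\subset\mathfrak L_{g_1+\dots+g_n}$. For $\sigma\in\mathbb S_n$ write $\langle x_1,\dots,x_n\rangle_\sigma:=\langle x_{\sigma(1)},\dots,x_{\sigma(n)}\rangle$; for subsets $A_1,\dots,A_n$, $\langle A_1,\dots,A_n\rangle_\sigma$ denotes the linear span of all $\langle x_1,\dots,x_n\rangle_\sigma$ with $x_r\in A_r$. A color gLt-algebra is a graded $n$-ary algebra satisfying, for each $k=1,\dots,n$ and fixed scalars $\alpha^{\sigma_1,\sigma_2}_{i,j,k}\in\mathbb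 F$, the color version (each term on the right multiplied by the product of values of $\epsilon$ on the degrees of the homogeneous arguments transposed in passing from the left-hand order to the order of that term) of the identity $\langle y_1,\dots,y_{k-1},\langle x_1,\dots,x_n\rangle,y_k,\dots,y_{n-1}\rangle=\sum_{1\le i,j\le n,\,\sigma_1\in\mathbb S_n,\,\sigma_2\in\mathbb S_{n-1}}\alpha^{\sigma_1,\sigma_2}_{i,j,k}\langle x_{\sigma_1(1)},\dots,x_{\sigma_1(i-1)},\langle y_{\sigma_2(1)},\dots,y_{\sigma_2(j-1)},x_{\sigma_1(i)},y_{\sigma_2(j)},\dots,y_{\sigma_2(n-1)}\rangle,x_{\sigma_1(i+1)},\dots,x_{\sigma_1(n)}\rangle$. A $\mathbb G$-graded subspace $\mathcal I\subset\mathfrak L$ is a color gLt-ideal if $\langle\mathcal I,\mathfrak L,\dots,\mathfrak L\rangle_\sigma\subset\mathcal I$ for every $\sigma\in\mathbb S_n$. A basis $\mathfrak B=\{e_i\}_{i\in I}$ of homogeneous elements of $\mathfrak L$ is multiplicative if for all $i_1,\dots,i_n\in I$, $\langle e_{i_1},\dots,e_{i_n}\rangle\in\mathbb Fe_j$ for some $j\in I$. Such a basis is regarded as a quasi-multiplicative basis with $\mathbb V=0$ and $\mathbb W=\mathfrak L$ (quasi-multiplicative basis: $\mathfrak L=\mathbb V\oplus\mathbb W$, $\mathbb V,\mathbb W\ne0$ graded subspaces, $\{e_i\}_{i\in I}$ a homogeneous basis of $\mathbb W$ with: products of basis elements in some $\mathbb Fe_j$ or in $\mathbb V$; for $0<k<n$,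 $\langle e_{i_1},\dots,e_{i_k},\mathbb V,\dots,\mathbb V\rangle_\sigma\subset\mathbb Fe_{j_\sigma}$; $\langle\mathbb V,\dots,\mathbb V\rangle$ in some $\mathbb Fe_j$ or in $\mathbb V$). Index maps: let $v$ be a symbol not in $I$, $\mathfrak I:=I\,\dot\cup\,\{v\}$; for each $j\in\mathfrak I$ take a new symbol $\overline j$, $\overline I:=\{\overline i:i\in I\}$, $\overline{\mathfrak I}:=\overline I\,\dot\cup\,\{\overline v\}$; set $\overline{(\overline j)}:=j$, $\overline J:=\{\overline j:j\in J\}$ for a set $J$ of symbols ($\overline\emptyset=\emptyset$). Put $u_j:=e_j$ for $j\in I$ and $u_v:=\mathbb V$. For $\sigma\in\mathbb S_n$ and $(j_1,\dots,j_n)\in\mathfrak I^n$ let $a_\sigma(j_1,\dots,j_n)=\{r\}$ if $r\in I$ and $0\ne\langle u_{j_1},\dots,u_{j_n}\rangle_\sigma\subset\mathbb Fe_r$, $=\{v\}$ if $0\ne\langle u_{j_1},\dots,u_{j_n}\rangle_\sigma\subset\mathbb V$, and $=\emptyset$ otherwise. For $j,j_2,\dots,j_n\in\mathfrak I$ let $b_\sigma(j,\overline j_2,\dots,\overline j_n):=\{x\in\mathfrak I: a_\sigma(x,j_2,\dots,j_n)=\{j\}\}$. Define $\mu$ on $(\mathfrak I\,\dot\cup\,\overline{\mathfrak I})\times(\mathfrak I^{n-1}\,\dot\cup\,\overline{\mathfrak I}^{n-1})$ with values subsets of $\mathfrak I$ by: $\mu(j,j_1,\dots,j_{n-1})=\bigcup_{\sigma\in\mathbb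 S_n}a_\sigma(j,j_1,\dots,j_{n-1})$ for $j,j_1,\dots,j_{n-1}\in\mathfrak I$; $\mu(j,\overline j_1,\dots,\overline j_{n-1})=\bigcup_{\sigma\in\mathbb S_n}b_\sigma(j,\overline j_1,\dots,\overline j_{n-1})$ for $j,j_1,\dots,j_{n-1}\in\mathfrak I$; $\mu(\overline j,j_1,\dots,j_{n-1})=\bigcup_{1\le k\le n-1,\ \sigma\in\mathbb S_n}b_\sigma(j_k,\overline j,\overline j_1,\dots,\overline j_{k-1},\overline j_{k+1},\dots,\overline j_{n-1})$ for $j,j_1,\dots,j_{n-1}\in\mathfrak I$; and $\mu(\overline j,\overline j_1,\dots,\overline j_{n-1})=\emptyset$. Define $\phi$ on pairs $(J,X)$ with $J\subset I\,\dot\cup\,\overline I$ and $X\in\mathfrak I^{n-1}\,\dot\cup\,\overline{\mathfrak I}^{n-1}$ by $\phi(\emptyset,X)=\emptyset$ and, for $J\ne\emptyset$, $\phi(J,X):=K\cup\overline K$ where $K:=\big(\bigcup_{j\in J}\mu(j,X)\big)\setminus\{v\}$. Connections: for distinct $i,j\in I$, $i$ is connected to $j$ if there exist $t\ge1$, $X_1,\dots,X_t\in\mathfrak I^{n-1}\,\dot\cup\,\overline{\mathfrak I}^{n-1}$ and $\widetilde i\in\{i,\overline i\}$ such that $\phi(\{\widetilde i\},X_1)\ne\emptyset$, …, $\phi(\cdots\phi(\{\widetilde i\},X_1)\cdots,X_{t-1})\ne\emptyset$, and $j\in\phi(\cdots\phi(\phi(\{\widetilde i\},X_1),X_2)\cdots,X_t)$;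 every $i$ is connected to itself. Being connected is an equivalence relation $\sim$ on $I$; $[i]$ denotes the class of $i$. Define $\mathbb V_{[i]}:=\big(\sum_{i_1,\dots,i_n\in[i]}\mathbb F\langle e_{i_1},\dots,e_{i_n}\rangle\big)\cap\mathbb V$, $\mathbb W_{[i]}:=\bigoplus_{j\in[i]}\mathbb Fe_j$, and $\mathfrak J_{[i]}:=\mathbb V_{[i]}\oplus\mathbb W_{[i]}$ (here $\mathbb V_{[i]}=0$). *)

theory Defs
  imports Complex_Main "HOL-Combinatorics.Permutations"
begin

(* Conventions: all indices are 0-based.  An n-ary product is a map on lists
   (only lists of length n matter).  A permutation of {1..n} is a map
   sigma with sigma permutes {..<n}. *)

definition internal_direct_sum ::
  "('k::field \<Rightarrow> 'v::ab_group_add \<Rightarrow> 'v) \<Rightarrow> ('a \<Rightarrow> 'v set) \<Rightarrow> 'a set \<Rightarrow> 'v set \<Rightarrow> bool" where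
  "internal_direct_sum scale A S W \<longleftrightarrow>
     (\<forall>a\<in>S. module.subspace scale (A a)) \<and>
     (\<forall>w. w \<in> W \<longleftrightarrow> (\<exists>f. (\<forall>a. a \<notin> S \<longrightarrow> f a = 0) \<and> finite {a. f a \<noteq> 0} \<and>
                          (\<forall>a\<in>S. f a \<in> A a) \<and> w = sum f {a. f a \<noteq> 0})) \<and>
     (\<forall>w. \<forall>f g. (\<forall>a. a \<notin> S \<longrightarrow> f a = 0) \<and> finite {a. f a \<noteq> 0} \<and>
                 (\<forall>a\<in>S. f a \<in> A a) \<and> w = sum f {a. f a \<noteq> 0} \<and>
                 (\<forall>a. a \<notin> S \<longrightarrow> g a = 0) \<and> finite {a. g a \<noteq> 0} \<and>
                 (\<forall>a\<in>S. g a \<in> A a) \<and> w = sum g {a. g a \<noteq> 0} \<longrightarrow> f = g)"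

definition graded_space :: "('k::field \<Rightarrow> 'v::ab_group_add \<Rightarrow> 'v) \<Rightarrow> ('g \<Rightarrow> 'v set) \<Rightarrow> bool" where
  "graded_space scale Lg \<longleftrightarrow> internal_direct_sum scale Lg UNIV UNIV"

definition graded_subspace ::
  "('k::field \<Rightarrow> 'v::ab_group_add \<Rightarrow> 'v) \<Rightarrow> ('g \<Rightarrow> 'v set) \<Rightarrow> 'v set \<Rightarrow> bool" where
  "graded_subspace scale Lg J \<longleftrightarrow> module.subspace scale J \<and>
     (\<forall>x\<in>J. \<exists>f. finite {g. f g \<noteq> 0} \<and> (\<forall>g. f g \<in> J \<inter> Lg g) \<and> x = sum f {g. f g \<noteq> 0})"

definition n_linear :: "('k::field \<Rightarrow> 'v::ab_group_add \<Rightarrow> 'v) \<Rightarrow> nat \<Rightarrow> ('v list \<Rightarrow> 'v) \<Rightarrow> bool" where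
  "n_linear scale n br \<longleftrightarrow>
     (\<forall>xs k a b c. length xs = n \<and> k < n \<longrightarrow>
        br (xs[k := a + b]) = br (xs[k := a]) + br (xs[k := b]) \<and>
        br (xs[k := scale c a]) = scale c (br (xs[k := a])))"

definition graded_product :: "('g::ab_group_add \<Rightarrow> 'v set) \<Rightarrow> nat \<Rightarrow> ('v list \<Rightarrow> 'v) \<Rightarrow> bool" where
  "graded_product Lg n br \<longleftrightarrow>
     (\<forall>xs ds. length xs = n \<and> length ds = n \<and> (\<forall>r<n. xs ! r \<in> Lg (ds ! r)) \<longrightarrow>
        br xs \<in> Lg (sum_list ds))"

definition graded_nary_algebra ::
  "('k::field \<Rightarrow> 'v::ab_group_add \<Rightarrow> 'v) \<Rightarrow> ('g::ab_group_add \<Rightarrow> 'v set) \<Rightarrow> nat \<Rightarrow> ('v list \<Rightarrow> 'v) \<Rightarrow> bool" where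
  "graded_nary_algebra scale Lg n br \<longleftrightarrow>
     vector_space scale \<and> graded_space scale Lg \<and> n_linear scale n br \<and> graded_product Lg n br"

definition bicharacter :: "('g::ab_group_add \<Rightarrow> 'g \<Rightarrow> 'k::field) \<Rightarrow> bool" where
  "bicharacter eps \<longleftrightarrow>
     (\<forall>g h. eps g h \<noteq> 0) \<and>
     (\<forall>k g h. eps k (g + h) = eps k g * eps k h) \<and>
     (\<forall>k g h. eps (g + h) k = eps g k * eps h k) \<and>
     (\<forall>g h. eps g h * eps h g = 1)"

definition perm_args :: "(nat \<Rightarrow> nat) \<Rightarrow> 'v list \<Rightarrow> 'v list" where
  "perm_args \<sigma> xs = map (\<lambda>t. xs ! \<sigma> t) [0..<length xs]"

(* color factor: product of eps(deg a, deg b) over all pairs of arguments a, b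
   such that a precedes b in the order L but b precedes a in the order R *)
definition color_factor :: "('g \<Rightarrow> 'g \<Rightarrow> 'k::field) \<Rightarrow> ('a \<Rightarrow> 'g) \<Rightarrow> 'a list \<Rightarrow> 'a list \<Rightarrow> 'k" where
  "color_factor eps d L R =
     (\<Prod>(p, q) \<in> {(p, q). p < q \<and> q < length L \<and>
          (\<exists>p' q'. q' < p' \<and> p' < length R \<and> R ! p' = L ! p \<and> R ! q' = L ! q)}.
        eps (d (L ! p)) (d (L ! q)))"

(* arguments: Inl r = x_r, Inr s = y_s *)
definition lab_deg :: "'g list \<Rightarrow> 'g list \<Rightarrow> nat + nat \<Rightarrow> 'g" where
  "lab_deg dx dy l = (case l of Inl r \<Rightarrow> dx ! r | Inr s \<Rightarrow> dy ! s)"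

definition lhs_labels :: "nat \<Rightarrow> nat \<Rightarrow> (nat + nat) list" where
  "lhs_labels n k = map Inr [0..<k] @ map Inl [0..<n] @ map Inr [k..<n - 1]"

definition rhs_labels :: "nat \<Rightarrow> nat \<Rightarrow> nat \<Rightarrow> (nat \<Rightarrow> nat) \<Rightarrow> (nat \<Rightarrow> nat) \<Rightarrow> (nat + nat) list" where
  "rhs_labels n i j \<sigma>1 \<sigma>2 =
     map (Inl \<circ> \<sigma>1) [0..<i] @ map (Inr \<circ> \<sigma>2) [0..<j] @ [Inl (\<sigma>1 i)] @
     map (Inr \<circ> \<sigma>2) [j..<n - 1] @ map (Inl \<circ> \<sigma>1) [Suc i..<n]"

definition gLt_term :: "('v list \<Rightarrow> 'v) \<Rightarrow> 'v list \<Rightarrow> 'v list \<Rightarrow> nat \<Rightarrow> nat \<Rightarrow> (nat \<Rightarrow> nat) \<Rightarrow> (nat \<Rightarrow> nat) \<Rightarrow> 'v" where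
  "gLt_term br xs ys i j \<sigma>1 \<sigma>2 =
     (let xp = perm_args \<sigma>1 xs; yp = perm_args \<sigma>2 ys
      in br (take i xp @ [br (take j yp @ [xp ! i] @ drop j yp)] @ drop (Suc i) xp))"

definition color_gLt_identity ::
  "('k::field \<Rightarrow> 'v::ab_group_add \<Rightarrow> 'v) \<Rightarrow> ('g::ab_group_add \<Rightarrow> 'v set) \<Rightarrow> ('g \<Rightarrow> 'g \<Rightarrow> 'k) \<Rightarrow> nat \<Rightarrow>
   ('v list \<Rightarrow> 'v) \<Rightarrow> (nat \<Rightarrow> nat \<Rightarrow> nat \<Rightarrow> (nat \<Rightarrow> nat) \<Rightarrow> (nat \<Rightarrow> nat) \<Rightarrow> 'k) \<Rightarrow> bool" where
  "color_gLt_identity scale Lg eps n br \<alpha> \<longleftrightarrow>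
     (\<forall>k<n. \<forall>xs ys dx dy.
        length xs = n \<and> length ys = n - 1 \<and> length dx = n \<and> length dy = n - 1 \<and>
        (\<forall>r<n. xs ! r \<in> Lg (dx ! r)) \<and> (\<forall>s<n - 1. ys ! s \<in> Lg (dy ! s)) \<longrightarrow>
        br (take k ys @ [br xs] @ drop k ys) =
        (\<Sum>i<n. \<Sum>j<n. \<Sum>\<sigma>1\<in>{\<sigma>. \<sigma> permutes {..<n}}. \<Sum>\<sigma>2\<in>{\<sigma>. \<sigma> permutes {..<n - 1}}.
           scale (\<alpha> i j k \<sigma>1 \<sigma>2 *
                  color_factor eps (lab_deg dx dy) (lhs_labels n k) (rhs_labels n i j \<sigma>1 \<sigma>2))
                 (gLt_term br xs ys i j \<sigma>1 \<sigma>2)))"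

definition color_gLt_algebra ::
  "('k::field \<Rightarrow> 'v::ab_group_add \<Rightarrow> 'v) \<Rightarrow> ('g::ab_group_add \<Rightarrow> 'v set) \<Rightarrow> ('g \<Rightarrow> 'g \<Rightarrow> 'k) \<Rightarrow> nat \<Rightarrow>
   ('v list \<Rightarrow> 'v) \<Rightarrow> (nat \<Rightarrow> nat \<Rightarrow> nat \<Rightarrow> (nat \<Rightarrow> nat) \<Rightarrow> (nat \<Rightarrow> nat) \<Rightarrow> 'k) \<Rightarrow> bool" where
  "color_gLt_algebra scale Lg eps n br \<alpha> \<longleftrightarrow>
     2 \<le> n \<and> bicharacter eps \<and> graded_nary_algebra scale Lg n br \<and>
     color_gLt_identity scale Lg eps n br \<alpha>"

definition color_gLt_ideal ::
  "('k::field \<Rightarrow> 'v::ab_group_add \<Rightarrow> 'v) \<Rightarrow> ('g \<Rightarrow> 'v set) \<Rightarrow> nat \<Rightarrow> ('v list \<Rightarrow> 'v) \<Rightarrow> 'v set \<Rightarrow> bool" where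
  "color_gLt_ideal scale Lg n br J \<longleftrightarrow>
     graded_subspace scale Lg J \<and>
     (\<forall>\<sigma>. \<sigma> permutes {..<n} \<longrightarrow>
        (\<forall>xs. length xs = n \<and> xs ! 0 \<in> J \<longrightarrow> br (perm_args \<sigma> xs) \<in> J))"

definition homogeneous_basis ::
  "('k::field \<Rightarrow> 'v::ab_group_add \<Rightarrow> 'v) \<Rightarrow> ('g \<Rightarrow> 'v set) \<Rightarrow> 'v set \<Rightarrow> ('i \<Rightarrow> 'v) \<Rightarrow> 'i set \<Rightarrow> bool" where
  "homogeneous_basis scale Lg W e I \<longleftrightarrow>
     inj_on e I \<and> \<not> module.dependent scale (e ` I) \<and> module.span scale (e ` I) = W \<and>
     (\<forall>i\<in>I. \<exists>g. e i \<in> Lg g)"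

definition products_multiplicative ::
  "('k::field \<Rightarrow> 'v::ab_group_add \<Rightarrow> 'v) \<Rightarrow> nat \<Rightarrow> ('v list \<Rightarrow> 'v) \<Rightarrow> ('i \<Rightarrow> 'v) \<Rightarrow> 'i set \<Rightarrow> bool" where
  "products_multiplicative scale n br e I \<longleftrightarrow>
     (\<forall>is. length is = n \<and> set is \<subseteq> I \<longrightarrow> (\<exists>j\<in>I. \<exists>c. br (map e is) = scale c (e j)))"

definition multiplicative_basis ::
  "('k::field \<Rightarrow> 'v::ab_group_add \<Rightarrow> 'v) \<Rightarrow> ('g \<Rightarrow> 'v set) \<Rightarrow> nat \<Rightarrow> ('v list \<Rightarrow> 'v) \<Rightarrow> 'v set \<Rightarrow>
   ('i \<Rightarrow> 'v) \<Rightarrow> 'i set \<Rightarrow> bool" where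
  "multiplicative_basis scale Lg n br W e I \<longleftrightarrow>
     homogeneous_basis scale Lg W e I \<and> products_multiplicative scale n br e I"

(* frak I = I \<union> {v}, with Some i = i and None = v.
   Symbols of frak I \<union> overline(frak I) are pairs (b, j), b = True meaning barred.
   Elements of frak I^(n-1) \<union> overline(frak I)^(n-1) are pairs (b, js). *)

definition frakI :: "'i set \<Rightarrow> 'i option set" where
  "frakI I = insert None (Some ` I)"

definition uset :: "('i \<Rightarrow> 'v) \<Rightarrow> 'v set \<Rightarrow> 'i option \<Rightarrow> 'v set" where
  "uset e V j = (case j of Some i \<Rightarrow> {e i} | None \<Rightarrow> V)"

definition prod_span ::
  "('k::field \<Rightarrow> 'v::ab_group_add \<Rightarrow> 'v) \<Rightarrow> nat \<Rightarrow> ('v list \<Rightarrow> 'v) \<Rightarrow> (nat \<Rightarrow> nat) \<Rightarrow> 'v set list \<Rightarrow> 'v set" where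
  "prod_span scale n br \<sigma> As =
     module.span scale {br (perm_args \<sigma> xs) | xs. length xs = n \<and> (\<forall>r<n. xs ! r \<in> As ! r)}"

definition a_map ::
  "('k::field \<Rightarrow> 'v::ab_group_add \<Rightarrow> 'v) \<Rightarrow> nat \<Rightarrow> ('v list \<Rightarrow> 'v) \<Rightarrow> ('i \<Rightarrow> 'v) \<Rightarrow> 'i set \<Rightarrow> 'v set \<Rightarrow>
   (nat \<Rightarrow> nat) \<Rightarrow> 'i option list \<Rightarrow> 'i option set" where
  "a_map scale n br e I V \<sigma> js =
     (let P = prod_span scale n br \<sigma> (map (uset e V) js) in
       {Some r | r. r \<in> I \<and> P \<noteq> {0} \<and> P \<subseteq> module.span scale {e r}} \<union>
       (if P \<noteq> {0} \<and> P \<subseteq> V then {None} else {}))"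

definition b_map ::
  "('k::field \<Rightarrow> 'v::ab_group_add \<Rightarrow> 'v) \<Rightarrow> nat \<Rightarrow> ('v list \<Rightarrow> 'v) \<Rightarrow> ('i \<Rightarrow> 'v) \<Rightarrow> 'i set \<Rightarrow> 'v set \<Rightarrow>
   (nat \<Rightarrow> nat) \<Rightarrow> 'i option \<Rightarrow> 'i option list \<Rightarrow> 'i option set" where
  "b_map scale n br e I V \<sigma> j js = {x \<in> frakI I. a_map scale n br e I V \<sigma> (x # js) = {j}}"

definition mu ::
  "('k::field \<Rightarrow> 'v::ab_group_add \<Rightarrow> 'v) \<Rightarrow> nat \<Rightarrow> ('v list \<Rightarrow> 'v) \<Rightarrow> ('i \<Rightarrow> 'v) \<Rightarrow> 'i set \<Rightarrow> 'v set \<Rightarrow>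
   bool \<times> 'i option \<Rightarrow> bool \<times> 'i option list \<Rightarrow> 'i option set" where
  "mu scale n br e I V jj X =
     (case (jj, X) of
        ((False, j), (False, js)) \<Rightarrow>
           (\<Union>\<sigma>\<in>{\<sigma>. \<sigma> permutes {..<n}}. a_map scale n br e I V \<sigma> (j # js))
      | ((False, j), (True, js)) \<Rightarrow>
           (\<Union>\<sigma>\<in>{\<sigma>. \<sigma> permutes {..<n}}. b_map scale n br e I V \<sigma> j js)
      | ((True, j), (False, js)) \<Rightarrow>
           (\<Union>k\<in>{..<n - 1}. \<Union>\<sigma>\<in>{\<sigma>. \<sigma> permutes {..<n}}.
              b_map scale n br e I V \<sigma> (js ! k) (j # take k js @ drop (Suc k) js))
      | ((True, j), (True, js)) \<Rightarrow> {})"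

definition phi ::
  "('k::field \<Rightarrow> 'v::ab_group_add \<Rightarrow> 'v) \<Rightarrow> nat \<Rightarrow> ('v list \<Rightarrow> 'v) \<Rightarrow> ('i \<Rightarrow> 'v) \<Rightarrow> 'i set \<Rightarrow> 'v set \<Rightarrow>
   (bool \<times> 'i option) set \<Rightarrow> bool \<times> 'i option list \<Rightarrow> (bool \<times> 'i option) set" where
  "phi scale n br e I V J X =
     (if J = {} then {}
      else (let K = (\<Union>j\<in>J. mu scale n br e I V j X) - {None} in UNIV \<times> K))"

definition phi_iter ::
  "('k::field \<Rightarrow> 'v::ab_group_add \<Rightarrow> 'v) \<Rightarrow> nat \<Rightarrow> ('v list \<Rightarrow> 'v) \<Rightarrow> ('i \<Rightarrow> 'v) \<Rightarrow> 'i set \<Rightarrow> 'v set \<Rightarrow>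
   (bool \<times> 'i option) set \<Rightarrow> (bool \<times> 'i option list) list \<Rightarrow> (bool \<times> 'i option) set" where
  "phi_iter scale n br e I V J Xs = fold (\<lambda>X A. phi scale n br e I V A X) Xs J"

definition valid_tuple :: "'i set \<Rightarrow> nat \<Rightarrow> bool \<times> 'i option list \<Rightarrow> bool" where
  "valid_tuple I n X \<longleftrightarrow> length (snd X) = n - 1 \<and> set (snd X) \<subseteq> frakI I"

definition connected ::
  "('k::field \<Rightarrow> 'v::ab_group_add \<Rightarrow> 'v) \<Rightarrow> nat \<Rightarrow> ('v list \<Rightarrow> 'v) \<Rightarrow> ('i \<Rightarrow> 'v) \<Rightarrow> 'i set \<Rightarrow> 'v set \<Rightarrow>
   'i \<Rightarrow> 'i \<Rightarrow> bool" where
  "connected scale n br e I V i j \<longleftrightarrow> i \<in> I \<and> j \<in> I \<and>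
     (i = j \<or>
      (\<exists>Xs it. Xs \<noteq> [] \<and> (\<forall>X\<in>set Xs. valid_tuple I n X) \<and> it \<in> {(False, Some i), (True, Some i)} \<and>
         (\<forall>m. 1 \<le> m \<and> m < length Xs \<longrightarrow> phi_iter scale n br e I V {it} (take m Xs) \<noteq> {}) \<and>
         (False, Some j) \<in> phi_iter scale n br e I V {it} Xs))"

definition conn_rel ::
  "('k::field \<Rightarrow> 'v::ab_group_add \<Rightarrow> 'v) \<Rightarrow> nat \<Rightarrow> ('v list \<Rightarrow> 'v) \<Rightarrow> ('i \<Rightarrow> 'v) \<Rightarrow> 'i set \<Rightarrow> 'v set \<Rightarrow> ('i \<times> 'i) set" where
  "conn_rel scale n br e I V = {(i, j). connected scale n br e I V i j}"

definition J_class ::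
  "('k::field \<Rightarrow> 'v::ab_group_add \<Rightarrow> 'v) \<Rightarrow> nat \<Rightarrow> ('v list \<Rightarrow> 'v) \<Rightarrow> ('i \<Rightarrow> 'v) \<Rightarrow> 'v set \<Rightarrow> 'i set \<Rightarrow> 'v set" where
  "J_class scale n br e V C =
     {a + b | a b. a \<in> module.span scale {br (map e is) | is. length is = n \<and> set is \<subseteq> C} \<inter> V \<and>
                  b \<in> module.span scale (e ` C)}"

end

theory Submission
  imports Defs
begin

(* For V = 0 the connection relation is the reflexive closure of the transitive closure of a
   one-step relation i \<rightarrow> j: some nonzero product of basis elements in which e_i occurs is a
   multiple of e_j.  The barred symbols of the index maps make this step relation symmetric as
   soon as distinct indices give independent basis vectors, so connection is an equivalence.
   Since every nonzero product of basis elements is a multiple of a basis vector connected to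
   each of its factors, multilinearity shows that the span of a class absorbs products with
   arbitrary elements; and the spans of the blocks of a partition of a basis form a direct sum. *)

section \<open>Finite sums from a family of subspaces\<close>

definition family_sums :: "('k::field \<Rightarrow> 'v::ab_group_add \<Rightarrow> 'v) \<Rightarrow> ('a \<Rightarrow> 'v set) \<Rightarrow> 'a set \<Rightarrow> 'v set" where
  "family_sums scale A S = {w. \<exists>f. (\<forall>a. a \<notin> S \<longrightarrow> f a = 0) \<and> finite {a. f a \<noteq> 0} \<and>
                          (\<forall>a\<in>S. f a \<in> A a) \<and> w = sum f {a. f a \<noteq> 0}}"

lemma sum_nonzero_eq:
  assumes "finite F" "{a. f a \<noteq> 0} \<subseteq> F"
  shows "sum f {a. f a \<noteq> (0::'v::comm_monoid_add)} = sum f F"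
  using assms by (intro sum.mono_neutral_left) auto

context vector_space
begin

lemma family_sums_single:
  assumes "a \<in> S" "x \<in> A a" "\<forall>b\<in>S. 0 \<in> A b"
  shows "x \<in> family_sums scale A S"
proof -
  define f where "f = (\<lambda>b. if b = a then x else 0)"
  have supp: "{b. f b \<noteq> 0} \<subseteq> {a}" by (auto simp: f_def)
  have "sum f {b. f b \<noteq> 0} = x"
    using sum_nonzero_eq[OF _ supp] by (simp add: f_def)
  then show ?thesis
    unfolding family_sums_def using assms finite_subset[OF supp]
    by (intro CollectI exI[of _ f]) (auto simp: f_def)
qed

lemma subspace_family_sums:
  assumes "\<forall>a\<in>S. subspace (A a)"
  shows "subspace (family_sums scale A S)"
  unfolding subspace_def
proof (intro conjI ballI allI)
  show "0 \<in> family_sums scale A S"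
    unfolding family_sums_def using assms by (auto intro!: exI[of _ "\<lambda>_. 0"] simp: subspace_0)
next
  fix x y assume "x \<in> family_sums scale A S" "y \<in> family_sums scale A S"
  then obtain f g where
    f: "\<forall>a. a \<notin> S \<longrightarrow> f a = 0" "finite {a. f a \<noteq> 0}" "\<forall>a\<in>S. f a \<in> A a" "x = sum f {a. f a \<noteq> 0}" and
    g: "\<forall>a. a \<notin> S \<longrightarrow> g a = 0" "finite {a. g a \<noteq> 0}" "\<forall>a\<in>S. g a \<in> A a" "y = sum g {a. g a \<noteq> 0}"
    unfolding family_sums_def by blast
  define F where "F = {a. f a \<noteq> 0} \<union> {a. g a \<noteq> 0}"
  have F: "finite F" using f g by (simp add: F_def)
  have supp: "{a. f a + g a \<noteq> 0} \<subseteq> F" by (auto simp: F_def)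
  have "sum (\<lambda>a. f a + g a) {a. f a + g a \<noteq> 0} = sum (\<lambda>a. f a + g a) F"
    by (rule sum_nonzero_eq[OF F supp])
  also have "\<dots> = sum f F + sum g F" by (simp add: sum.distrib)
  also have "\<dots> = x + y"
    using f(4) g(4) sum_nonzero_eq[OF F, of f] sum_nonzero_eq[OF F, of g] by (auto simp: F_def)
  finally show "x + y \<in> family_sums scale A S"
    unfolding family_sums_def using f g assms finite_subset[OF supp F]
    by (intro CollectI exI[of _ "\<lambda>a. f a + g a"]) (auto simp: subspace_add)
next
  fix c x assume "x \<in> family_sums scale A S"
  then obtain f where
    f: "\<forall>a. a \<notin> S \<longrightarrow> f a = 0" "finite {a. f a \<noteq> 0}" "\<forall>a\<in>S. f a \<in> A a" "x = sum f {a. f a \<noteq> 0}"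
    unfolding family_sums_def by blast
  have supp: "{a. c *s f a \<noteq> 0} \<subseteq> {a. f a \<noteq> 0}" by auto
  have "sum (\<lambda>a. c *s f a) {a. c *s f a \<noteq> 0} = sum (\<lambda>a. c *s f a) {a. f a \<noteq> 0}"
    by (rule sum_nonzero_eq[OF f(2) supp])
  also have "\<dots> = c *s x" using f(4) by (simp add: scale_sum_right)
  finally have "sum (\<lambda>a. c *s f a) {a. c *s f a \<noteq> 0} = c *s x" .
  then show "c *s x \<in> family_sums scale A S"
    unfolding family_sums_def using f assms finite_subset[OF supp f(2)]
    by (intro CollectI exI[of _ "\<lambda>a. c *s f a"]) (auto simp: subspace_scale)
qed

lemma span_disjoint_subsets_Int:
  assumes ind: "independent B" and "X \<subseteq> B" "Y \<subseteq> B" "X \<inter> Y = {}"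
    and v: "v \<in> span X" "v \<in> span Y"
  shows "v = 0"
proof -
  have "representation B v = representation X v" "representation B v = representation Y v"
    using representation_extend[OF ind v(1) \<open>X \<subseteq> B\<close>] representation_extend[OF ind v(2) \<open>Y \<subseteq> B\<close>]
    by auto
  then have "representation B v b = 0" for b
    using representation_ne_zero[of X v b] representation_ne_zero[of Y v b] \<open>X \<inter> Y = {}\<close> by auto
  moreover have "v \<in> span B" using v(1) span_mono[OF \<open>X \<subseteq> B\<close>] by auto
  ultimately show ?thesis using sum_nonzero_representation_eq[OF ind] by force
qed

lemma span_partition_sum_eq_0:
  assumes inj: "inj_on e I" and ind: "independent (e ` I)"
    and P: "\<forall>C\<in>P. C \<subseteq> I" "\<forall>C\<in>P. \<forall>C'\<in>P. C \<noteq> C' \<longrightarrow> C \<inter> C' = {}"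
    and F: "finite F" "F \<subseteq> P" and d: "\<forall>C\<in>F. d C \<in> span (e ` C)" and sum: "sum d F = 0"
    and C: "C \<in> F"
  shows "d C = 0"
proof (rule span_disjoint_subsets_Int[OF ind, of "e ` C" "e ` (I - C)"])
  have "d C = - sum d (F - {C})"
    using sum sum.remove[OF F(1) C, of d] by (simp add: eq_neg_iff_add_eq_0)
  moreover have "sum d (F - {C}) \<in> span (e ` (I - C))"
  proof (rule span_sum)
    fix C' assume C': "C' \<in> F - {C}"
    then have "C' \<subseteq> I - C" using P F C by blast
    then show "d C' \<in> span (e ` (I - C))"
      using d C' span_mono[of "e ` C'" "e ` (I - C)"] by auto
  qed
  ultimately show "d C \<in> span (e ` (I - C))" by (simp add: span_neg)
  have "C \<subseteq> I" using P F C by blast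
  then show "e ` C \<inter> e ` (I - C) = {}" using inj by (auto simp: inj_on_def)
qed (use P F C d in blast)+

lemma internal_direct_sum_span_partition:
  assumes inj: "inj_on e I" and ind: "independent (e ` I)" and spI: "span (e ` I) = UNIV"
    and P: "\<Union>P = I" "\<forall>C\<in>P. \<forall>C'\<in>P. C \<noteq> C' \<longrightarrow> C \<inter> C' = {}"
  shows "internal_direct_sum scale (\<lambda>C. span (e ` C)) P UNIV"
  unfolding internal_direct_sum_def
proof (intro conjI allI impI ballI)
  fix w
  have "e ` I \<subseteq> family_sums scale (\<lambda>C. span (e ` C)) P"
    using P(1) by (auto intro!: family_sums_single simp: span_base span_zero)
  then have "span (e ` I) \<subseteq> family_sums scale (\<lambda>C. span (e ` C)) P"
    by (rule span_minimal) (simp add: subspace_family_sums)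
  then show "w \<in> UNIV \<longleftrightarrow> (\<exists>f. (\<forall>a. a \<notin> P \<longrightarrow> f a = 0) \<and> finite {a. f a \<noteq> 0} \<and>
               (\<forall>a\<in>P. f a \<in> span (e ` a)) \<and> w = sum f {a. f a \<noteq> 0})"
    using spI unfolding family_sums_def by auto
next
  fix w f g
  assume h: "(\<forall>a. a \<notin> P \<longrightarrow> f a = 0) \<and> finite {a. f a \<noteq> 0} \<and>
               (\<forall>a\<in>P. f a \<in> span (e ` a)) \<and> w = sum f {a. f a \<noteq> 0} \<and>
               (\<forall>a. a \<notin> P \<longrightarrow> g a = 0) \<and> finite {a. g a \<noteq> 0} \<and>
               (\<forall>a\<in>P. g a \<in> span (e ` a)) \<and> w = sum g {a. g a \<noteq> 0}"
  define F where "F = {a. f a \<noteq> 0} \<union> {a. g a \<noteq> 0}"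
  have F: "finite F" "F \<subseteq> P" using h by (auto simp: F_def)
  have "sum f F = sum g F"
    using h sum_nonzero_eq[OF F(1), of f] sum_nonzero_eq[OF F(1), of g] by (auto simp: F_def)
  then have "sum (\<lambda>C. f C - g C) F = 0" by (simp add: sum_subtractf)
  moreover have "\<forall>C\<in>P. C \<subseteq> I" using P(1) by blast
  moreover have "\<forall>C\<in>F. f C - g C \<in> span (e ` C)" using h F(2) by (blast intro: span_diff)
  ultimately have diff: "f C - g C = 0" if "C \<in> F" for C
    using span_partition_sum_eq_0[OF inj ind _ P(2) F, where d = "\<lambda>C. f C - g C"] that by blast
  show "f = g"
  proof
    fix C
    show "f C = g C"
    proof (cases "C \<in> F")
      case True
      then show ?thesis using diff[OF True] by simp
    qed (simp add: F_def)
  qed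
qed simp

end

section \<open>Multilinear products\<close>

context vector_space
begin

lemma n_linear_zero_arg:
  assumes "n_linear scale n br" "length xs = n" "k < n"
  shows "br (xs[k := 0]) = 0"
proof -
  have "br (xs[k := 0 + 0]) = br (xs[k := 0]) + br (xs[k := 0])"
    using assms unfolding n_linear_def by blast
  then show ?thesis by simp
qed

lemma n_linear_subspace_arg:
  assumes nl: "n_linear scale n br" and J: "subspace J" and ys: "length ys = n" "m < n"
  shows "subspace {a. br (ys[m := a]) \<in> J}"
  unfolding subspace_def
proof (intro conjI ballI allI)
  show "0 \<in> {a. br (ys[m := a]) \<in> J}"
    using n_linear_zero_arg[OF nl ys] subspace_0[OF J] by simp
next
  fix x y assume "x \<in> {a. br (ys[m := a]) \<in> J}" "y \<in> {a. br (ys[m := a]) \<in> J}"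
  moreover have "br (ys[m := x + y]) = br (ys[m := x]) + br (ys[m := y])"
    using nl ys unfolding n_linear_def by blast
  ultimately show "x + y \<in> {a. br (ys[m := a]) \<in> J}" using subspace_add[OF J] by simp
next
  fix c x assume "x \<in> {a. br (ys[m := a]) \<in> J}"
  moreover have "br (ys[m := c *s x]) = c *s br (ys[m := x])"
    using nl ys unfolding n_linear_def by blast
  ultimately show "c *s x \<in> {a. br (ys[m := a]) \<in> J}" using subspace_scale[OF J] by simp
qed

lemma n_linear_span_args:
  assumes nl: "n_linear scale n br" and J: "subspace J"
    and gen: "\<And>ys. length ys = n \<Longrightarrow> \<forall>k<n. ys ! k \<in> G k \<Longrightarrow> br ys \<in> J"
    and ys: "length ys = n" "\<forall>k<n. ys ! k \<in> span (G k)"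
  shows "br ys \<in> J"
proof -
  \<comment> \<open>Replace the arguments by generators one position at a time, from the right.\<close>
  have claim: "br ys \<in> J" if "length ys = n" "\<forall>k<n. ys ! k \<in> span (G k)" "\<forall>k. m \<le> k \<and> k < n \<longrightarrow> ys ! k \<in> G k"
    for ys m
    using that
  proof (induction m arbitrary: ys)
    case 0
    then show ?case using gen by auto
  next
    case (Suc m)
    show ?case
    proof (cases "m < n")
      case False
      then show ?thesis using Suc by auto
    next
      case True
      have "G m \<subseteq> {a. br (ys[m := a]) \<in> J}"
      proof
        fix a assume "a \<in> G m"
        then have "br (ys[m := a]) \<in> J"
          using Suc.prems True span_base[of a "G m"]
          by (intro Suc.IH) (auto simp: nth_list_update)
        then show "a \<in> {a. br (ys[m := a]) \<in> J}" by simp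
      qed
      then have "span (G m) \<subseteq> {a. br (ys[m := a]) \<in> J}"
        using n_linear_subspace_arg[OF nl J Suc.prems(1) True] by (rule span_minimal)
      then show ?thesis using Suc.prems True by auto
    qed
  qed
  show ?thesis by (rule claim[where m = n, OF ys]) auto
qed

end

section \<open>The connection relation as a transitive closure\<close>

definition conn_step ::
  "('k::field \<Rightarrow> 'v::ab_group_add \<Rightarrow> 'v) \<Rightarrow> nat \<Rightarrow> ('v list \<Rightarrow> 'v) \<Rightarrow> ('i \<Rightarrow> 'v) \<Rightarrow> 'i set \<Rightarrow> 'v set \<Rightarrow> ('i \<times> 'i) set" where
  "conn_step scale n br e I V =
     {(x, y). \<exists>b X. valid_tuple I n X \<and> Some y \<in> mu scale n br e I V (b, Some x) X}"

lemma conn_stepI: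
  "valid_tuple I n X \<Longrightarrow> Some y \<in> mu scale n br e I V (b, Some x) X \<Longrightarrow> (x, y) \<in> conn_step scale n br e I V"
  unfolding conn_step_def by blast

lemma Some_mem_mu_imp_mem: "Some y \<in> mu scale n br e I V s X \<Longrightarrow> y \<in> I"
  by (auto simp: mu_def a_map_def b_map_def frakI_def Let_def split: prod.splits bool.splits if_splits)

lemma conn_step_trancl_target: "(x, y) \<in> (conn_step scale n br e I V)\<^sup>+ \<Longrightarrow> y \<in> I"
  by (erule tranclE) (auto simp: conn_step_def dest: Some_mem_mu_imp_mem)

lemma phi_eq: "phi scale n br e I V J X = {t. \<exists>s\<in>J. snd t \<noteq> None \<and> snd t \<in> mu scale n br e I V s X}"
  unfolding phi_def by (auto simp: Let_def)

lemma phi_iter_append: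
  "phi_iter scale n br e I V J (Xs @ Ys) = phi_iter scale n br e I V (phi_iter scale n br e I V J Xs) Ys"
  by (simp add: phi_iter_def)

lemma phi_iter_snoc:
  "phi_iter scale n br e I V J (Xs @ [X]) = phi scale n br e I V (phi_iter scale n br e I V J Xs) X"
  by (simp add: phi_iter_def)

lemma phi_iter_empty: "phi_iter scale n br e I V {} Ys = {}"
  by (induction Ys) (auto simp: phi_iter_def phi_def)

lemma phi_iter_take_nonempty:
  assumes "phi_iter scale n br e I V J Xs \<noteq> {}"
  shows "phi_iter scale n br e I V J (take m Xs) \<noteq> {}"
  using assms phi_iter_append[of scale n br e I V J "take m Xs" "drop m Xs"]
  by (auto simp: phi_iter_empty)

lemma phi_iter_imp_conn_step_trancl:
  assumes "Xs \<noteq> []" "\<forall>X\<in>set Xs. valid_tuple I n X" "t \<in> phi_iter scale n br e I V {(b, Some i)} Xs"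
  shows "\<exists>y. snd t = Some y \<and> (i, y) \<in> (conn_step scale n br e I V)\<^sup>+"
  using assms
proof (induction Xs arbitrary: t rule: rev_induct)
  case (snoc X Xs)
  from snoc.prems(3) obtain s y where s: "s \<in> phi_iter scale n br e I V {(b, Some i)} Xs"
    "snd t = Some y" "Some y \<in> mu scale n br e I V s X"
    by (auto simp: phi_iter_snoc phi_eq)
  have X: "valid_tuple I n X" using snoc.prems by auto
  show ?case
  proof (cases "Xs = []")
    case True
    then have "s = (b, Some i)" using s by (simp add: phi_iter_def)
    then show ?thesis using s X by (auto intro: conn_stepI)
  next
    case False
    with snoc.IH[OF False _ s(1)] snoc.prems obtain z where "snd s = Some z" "(i, z) \<in> (conn_step scale n br e I V)\<^sup>+"
      by auto
    moreover have "(z, y) \<in> conn_step scale n br e I V"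
      using s X \<open>snd s = Some z\<close> conn_stepI by (metis prod.collapse)
    ultimately show ?thesis using s(2) by auto
  qed
qed simp

lemma conn_step_trancl_imp_phi_iter:
  assumes "(i, j) \<in> (conn_step scale n br e I V)\<^sup>+"
  shows "\<exists>b Xs. Xs \<noteq> [] \<and> (\<forall>X\<in>set Xs. valid_tuple I n X) \<and>
           (\<forall>c. (c, Some j) \<in> phi_iter scale n br e I V {(b, Some i)} Xs)"
  using assms
proof (induction rule: trancl_induct)
  case (base y)
  then obtain b X where "valid_tuple I n X" "Some y \<in> mu scale n br e I V (b, Some i) X"
    unfolding conn_step_def by auto
  then show ?case
    by (intro exI[of _ b] exI[of _ "[X]"]) (auto simp: phi_iter_def phi_eq)
next
  case (step y z)
  from step.IH obtain b Xs where "Xs \<noteq> []" "\<forall>X\<in>set Xs. valid_tuple I n X"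
    "\<forall>c. (c, Some y) \<in> phi_iter scale n br e I V {(b, Some i)} Xs" by blast
  moreover from step.hyps(2) obtain b' X where
    "valid_tuple I n X" "Some z \<in> mu scale n br e I V (b', Some y) X"
    unfolding conn_step_def by auto
  ultimately show ?case
    by (intro exI[of _ b] exI[of _ "Xs @ [X]"]) (auto simp: phi_iter_snoc phi_eq)
qed

lemma connected_iff_conn_step_trancl:
  "connected scale n br e I V i j \<longleftrightarrow> i \<in> I \<and> j \<in> I \<and> (i = j \<or> (i, j) \<in> (conn_step scale n br e I V)\<^sup>+)"
proof
  assume c: "connected scale n br e I V i j"
  show "i \<in> I \<and> j \<in> I \<and> (i = j \<or> (i, j) \<in> (conn_step scale n br e I V)\<^sup>+)"
  proof (cases "i = j")
    case False
    with c obtain Xs it where h: "Xs \<noteq> []" "\<forall>X\<in>set Xs. valid_tuple I n X"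
      "it \<in> {(False, Some i), (True, Some i)}" "(False, Some j) \<in> phi_iter scale n br e I V {it} Xs"
      unfolding connected_def by blast
    from h(3) obtain b where "it = (b, Some i)" by auto
    with phi_iter_imp_conn_step_trancl[OF h(1,2)] h(4) have "(i, j) \<in> (conn_step scale n br e I V)\<^sup>+"
      by fastforce
    then show ?thesis using c unfolding connected_def by auto
  qed (use c in \<open>auto simp: connected_def\<close>)
next
  assume h: "i \<in> I \<and> j \<in> I \<and> (i = j \<or> (i, j) \<in> (conn_step scale n br e I V)\<^sup>+)"
  show "connected scale n br e I V i j"
  proof (cases "i = j")
    case False
    with h have "(i, j) \<in> (conn_step scale n br e I V)\<^sup>+" by auto
    from conn_step_trancl_imp_phi_iter[OF this] obtain b Xs where p: "Xs \<noteq> []"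
      "\<forall>X\<in>set Xs. valid_tuple I n X" "\<forall>c. (c, Some j) \<in> phi_iter scale n br e I V {(b, Some i)} Xs"
      by blast
    then have "phi_iter scale n br e I V {(b, Some i)} Xs \<noteq> {}" by blast
    then have "\<forall>m. phi_iter scale n br e I V {(b, Some i)} (take m Xs) \<noteq> {}"
      using phi_iter_take_nonempty by blast
    moreover have "(b, Some i) \<in> {(False, Some i), (True, Some i)}" by (cases b) auto
    ultimately show ?thesis
      unfolding connected_def using h p by (intro conjI disjI2 exI[of _ Xs] exI[of _ "(b, Some i)"]) auto
  qed (use h in \<open>auto simp: connected_def\<close>)
qed

section \<open>Index maps for a multiplicative basis\<close>

text \<open>With \<open>V = {0}\<close> the symbol \<open>v\<close> stands for the zero vector, so every product of the
  sets \<open>u\<^sub>j\<close> is the span of a single product of vectors.\<close>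

definition uvec :: "('i \<Rightarrow> 'v::ab_group_add) \<Rightarrow> 'i option \<Rightarrow> 'v" where
  "uvec e j = (case j of Some i \<Rightarrow> e i | None \<Rightarrow> 0)"

lemma prod_span_zero_eq:
  assumes "length js = n"
  shows "prod_span scale n br \<sigma> (map (uset e {0}) js) = module.span scale {br (perm_args \<sigma> (map (uvec e) js))}"
proof -
  have "xs = map (uvec e) js"
    if "length xs = n" "\<forall>r<n. xs ! r \<in> map (uset e {0}) js ! r" for xs
    by (rule nth_equalityI) (use that assms in \<open>auto simp: uset_def uvec_def split: option.splits\<close>)
  moreover have "\<forall>r<n. map (uvec e) js ! r \<in> map (uset e {0}) js ! r"
    using assms by (auto simp: uset_def uvec_def split: option.splits)
  ultimately have "{br (perm_args \<sigma> xs) | xs. length xs = n \<and> (\<forall>r<n. xs ! r \<in> map (uset e {0}) js ! r)}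
        = {br (perm_args \<sigma> (map (uvec e) js))}"
    using assms by auto
  then show ?thesis unfolding prod_span_def by simp
qed

context vector_space
begin

lemma a_map_zero_eq:
  assumes "length js = n"
  shows "a_map scale n br e I {0} \<sigma> js =
    {Some r | r. r \<in> I \<and> br (perm_args \<sigma> (map (uvec e) js)) \<noteq> 0 \<and> br (perm_args \<sigma> (map (uvec e) js)) \<in> span {e r}}"
proof -
  define p where "p = br (perm_args \<sigma> (map (uvec e) js))"
  have "span {p} \<subseteq> span {e r} \<longleftrightarrow> p \<in> span {e r}" for r
    using span_base[of p "{p}"] span_minimal[of "{p}" "span {e r}"] by auto
  moreover have "span {p} \<noteq> {0} \<longleftrightarrow> p \<noteq> 0"
    using span_base[of p "{p}"] by (auto simp: span_singleton)
  moreover have "\<not> (span {p} \<noteq> {0} \<and> span {p} \<subseteq> {0})"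
    using span_zero[of "{p}"] by auto
  ultimately show ?thesis
    unfolding a_map_def Let_def prod_span_zero_eq[OF assms] p_def[symmetric] by auto
qed

lemma span_singleton_basis_unique:
  assumes inj: "inj_on e I" and ind: "independent (e ` I)"
    and r: "r \<in> I" "r' \<in> I" and p: "p \<noteq> 0" "p \<in> span {e r}" "p \<in> span {e r'}"
  shows "r = r'"
proof (rule ccontr)
  assume "r \<noteq> r'"
  then have "e r \<noteq> e r'" using inj r by (auto dest: inj_onD)
  then have "p = 0"
    using p r by (intro span_disjoint_subsets_Int[OF ind, of "{e r}" "{e r'}"]) auto
  with p(1) show False by simp
qed

lemma a_map_zero_singleton:
  assumes inj: "inj_on e I" and ind: "independent (e ` I)" and "length js = n"
    and y: "y \<in> a_map scale n br e I {0} \<sigma> js"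
  shows "a_map scale n br e I {0} \<sigma> js = {y}"
  using y span_singleton_basis_unique[OF inj ind] unfolding a_map_zero_eq[OF \<open>length js = n\<close>] by blast

lemma a_map_zero_swap01:
  assumes "length (a # b # js) = n" "\<sigma> permutes {..<n}"
  shows "a_map scale n br e I {0} (Transposition.transpose 0 1 \<circ> \<sigma>) (a # b # js) =
         a_map scale n br e I {0} \<sigma> (b # a # js)"
proof -
  have *: "(a # b # xs) ! Transposition.transpose 0 (Suc 0) k = (b # a # xs) ! k" for a b :: 'v and xs k
  proof (cases k)
    case (Suc m) then show ?thesis by (cases m) auto
  qed auto
  have "perm_args (Transposition.transpose 0 1 \<circ> \<sigma>) (map (uvec e) (a # b # js)) =
        perm_args \<sigma> (map (uvec e) (b # a # js))"
    unfolding perm_args_def by (auto simp: * intro!: map_cong)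
  then show ?thesis using assms by (simp add: a_map_zero_eq)
qed

lemma b_map_zero_reverse:
  assumes n: "2 \<le> n" and len: "length js = n - 1" and k: "k < n - 1" and \<sigma>: "\<sigma> permutes {..<n}"
    and x: "x \<in> I"
    and y: "Some y \<in> b_map scale n br e I {0} \<sigma> (js ! k) (Some x # take k js @ drop (Suc k) js)"
  shows "Some x \<in> mu scale n br e I {0} (True, Some y) (False, js)"
proof -
  define \<tau> where "\<tau> = Transposition.transpose 0 1 \<circ> \<sigma>"
  have \<tau>: "\<tau> permutes {..<n}"
    unfolding \<tau>_def using n \<sigma> by (intro permutes_compose permutes_swap_id) auto
  define oth where "oth = take k js @ drop (Suc k) js"
  have "a_map scale n br e I {0} \<tau> (Some x # Some y # oth) = a_map scale n br e I {0} \<sigma> (Some y # Some x # oth)"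
    unfolding \<tau>_def by (rule a_map_zero_swap01[OF _ \<sigma>]) (use len k n in \<open>simp add: oth_def\<close>)
  also have "\<dots> = {js ! k}" using y by (simp add: b_map_def oth_def)
  finally have "Some x \<in> b_map scale n br e I {0} \<tau> (js ! k) (Some y # oth)"
    using x by (auto simp: b_map_def frakI_def)
  then show ?thesis using k \<tau> unfolding mu_def oth_def by auto
qed

text \<open>The three non-trivial cases of \<open>\<mu>\<close> are exchanged by reversing a step: an unbarred step
  becomes a step through \<open>b\<^sub>\<sigma>\<close>, and a barred step through \<open>b\<^sub>\<sigma>\<close> is reversed after swapping
  the first two arguments.\<close>

lemma conn_step_sym:
  assumes n: "2 \<le> n" and inj: "inj_on e I" and ind: "independent (e ` I)" and x: "x \<in> I"
    and step: "(x, y) \<in> conn_step scale n br e I {0}"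
  shows "(y, x) \<in> conn_step scale n br e I {0}"
proof -
  obtain b c js where v: "valid_tuple I n (c, js)" and y: "Some y \<in> mu scale n br e I {0} (b, Some x) (c, js)"
    using step unfolding conn_step_def by auto
  have len: "length js = n - 1" using v by (simp add: valid_tuple_def)
  have len1: "length (z # js) = n" for z using len n by simp
  have xF: "Some x \<in> frakI I" using x by (simp add: frakI_def)
  have "Some x \<in> mu scale n br e I {0} (False, Some y) (\<not> c, js) \<or>
        Some x \<in> mu scale n br e I {0} (True, Some y) (False, js)"
  proof (cases b; cases c)
    assume "\<not> b" "\<not> c"
    with y obtain \<sigma> where \<sigma>: "\<sigma> permutes {..<n}" "Some y \<in> a_map scale n br e I {0} \<sigma> (Some x # js)"
      by (auto simp: mu_def)
    with a_map_zero_singleton[OF inj ind len1] have "a_map scale n br e I {0} \<sigma> (Some x # js) = {Some y}"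
      by blast
    then show ?thesis using \<sigma>(1) xF \<open>\<not> c\<close> by (auto simp: mu_def b_map_def)
  next
    assume "\<not> b" "c"
    with y obtain \<sigma> where "\<sigma> permutes {..<n}" "Some y \<in> b_map scale n br e I {0} \<sigma> (Some x) js"
      by (auto simp: mu_def)
    then show ?thesis using \<open>c\<close> by (auto simp: mu_def b_map_def)
  next
    assume "b" "\<not> c"
    with y obtain k \<sigma> where "k < n - 1" "\<sigma> permutes {..<n}"
        "Some y \<in> b_map scale n br e I {0} \<sigma> (js ! k) (Some x # take k js @ drop (Suc k) js)"
      by (auto simp: mu_def)
    then show ?thesis using b_map_zero_reverse[OF n len _ _ x] by blast
  next
    assume "b" "c"
    with y show ?thesis by (simp add: mu_def)
  qed
  moreover have "valid_tuple I n (c', js)" for c' using v by (simp add: valid_tuple_def)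
  ultimately show ?thesis by (metis conn_stepI)
qed

lemma conn_step_trancl_sym:
  assumes n: "2 \<le> n" and inj: "inj_on e I" and ind: "independent (e ` I)"
  shows "(i, j) \<in> (conn_step scale n br e I {0})\<^sup>+ \<Longrightarrow> i \<in> I \<Longrightarrow> (j, i) \<in> (conn_step scale n br e I {0})\<^sup>+"
proof (induction rule: trancl_induct)
  case (base y)
  then show ?case using conn_step_sym[OF n inj ind] by blast
next
  case (step y z)
  have "y \<in> I" using conn_step_trancl_target[OF step.hyps(1)] .
  then have "(z, y) \<in> conn_step scale n br e I {0}" using conn_step_sym[OF n inj ind] step.hyps(2) by blast
  with step.IH step.prems show ?case by auto
qed

lemma equiv_conn_rel:
  assumes n: "2 \<le> n" and inj: "inj_on e I" and ind: "independent (e ` I)"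
  shows "equiv I (conn_rel scale n br e I {0})"
proof (rule equivI)
  show "conn_rel scale n br e I {0} \<subseteq> I \<times> I" "refl_on I (conn_rel scale n br e I {0})"
    by (auto simp: refl_on_def conn_rel_def connected_iff_conn_step_trancl)
  show "sym (conn_rel scale n br e I {0})"
    using conn_step_trancl_sym[OF n inj ind]
    by (auto simp: sym_def conn_rel_def connected_iff_conn_step_trancl)
  show "trans (conn_rel scale n br e I {0})"
    unfolding trans_def conn_rel_def connected_iff_conn_step_trancl by (auto intro: trancl_trans)
qed

text \<open>Taking \<open>\<sigma>\<close> to be the transposition of \<open>0\<close> and \<open>p\<close> brings the \<open>p\<close>-th factor to the first
  position, the only one that \<open>\<mu>\<close> reads off.\<close>

lemma conn_step_of_product:
  assumes n: "2 \<le> n" and l: "length is = n" and sI: "set is \<subseteq> I" and p: "p < n"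
    and nz: "br (map e is) \<noteq> 0" and sp: "br (map e is) \<in> span {e j}" and j: "j \<in> I"
  shows "(is ! p, j) \<in> conn_step scale n br e I {0}"
proof -
  define \<sigma> where "\<sigma> = Transposition.transpose 0 p"
  have \<sigma>: "\<sigma> permutes {..<n}" unfolding \<sigma>_def using p n by (intro permutes_swap_id) auto
  have \<sigma>lt: "t < n \<Longrightarrow> \<sigma> t < n" for t using permutes_in_image[OF \<sigma>, of t] by auto
  have \<sigma>\<sigma>: "\<sigma> (\<sigma> t) = t" for t unfolding \<sigma>_def by simp
  define L where "L = map (\<lambda>t. is ! \<sigma> t) [0..<n]"
  have lL: "length L = n" by (simp add: L_def)
  have "perm_args \<sigma> (map (uvec e \<circ> Some) L) = map e is"
    by (rule nth_equalityI) (auto simp: perm_args_def lL l L_def uvec_def \<sigma>lt \<sigma>\<sigma>)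
  then have "Some j \<in> a_map scale n br e I {0} \<sigma> (map Some L)"
    using lL j nz sp by (simp add: a_map_zero_eq)
  moreover have "map Some L = Some (L ! 0) # map Some (tl L)"
    using lL n by (cases L) auto
  ultimately have "Some j \<in> mu scale n br e I {0} (False, Some (L ! 0)) (False, map Some (tl L))"
    using \<sigma> unfolding mu_def by (auto simp only: prod.case bool.case)
  moreover have "set L \<subseteq> I" using sI l \<sigma>lt by (auto simp: L_def)
  then have "valid_tuple I n (False, map Some (tl L))"
    using lL by (cases L) (auto simp: valid_tuple_def frakI_def)
  moreover have "L ! 0 = is ! p" using n unfolding L_def \<sigma>_def by simp
  ultimately show ?thesis by (metis conn_stepI)
qed

lemma product_in_class:
  assumes n: "2 \<le> n" and inj: "inj_on e I" and ind: "independent (e ` I)"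
    and pm: "products_multiplicative scale n br e I"
    and C: "C \<in> I // conn_rel scale n br e I {0}"
    and l: "length is = n" and sI: "set is \<subseteq> I" and p: "p < n" and pC: "is ! p \<in> C"
  shows "\<exists>j\<in>C. \<exists>c. br (map e is) = c *s e j"
proof (cases "br (map e is) = 0")
  case True
  then show ?thesis using pC by (intro bexI[of _ "is ! p"] exI[of _ 0]) auto
next
  case False
  from pm l sI obtain j c where j: "j \<in> I" "br (map e is) = c *s e j"
    unfolding products_multiplicative_def by blast
  then have "br (map e is) \<in> span {e j}" by (simp add: span_base span_scale)
  from conn_step_of_product[where br = br and e = e and I = I, OF n l sI p False this j(1)]
  have "(is ! p, j) \<in> conn_rel scale n br e I {0}"
    using sI l p j by (auto simp: conn_rel_def connected_iff_conn_step_trancl)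
  then have "j \<in> C" using in_quotient_imp_closed[OF equiv_conn_rel[OF n inj ind] C pC] by simp
  then show ?thesis using j by blast
qed

section \<open>The spans of the classes\<close>

lemma J_class_zero_eq: "J_class scale n br e {0} C = span (e ` C)"
  unfolding J_class_def using span_zero by auto

lemma span_absorbs_products:
  assumes nl: "n_linear scale n br" and inj: "inj_on e I" and spI: "span (e ` I) = UNIV" and CI: "C \<subseteq> I"
    and prod: "\<And>is p. length is = n \<Longrightarrow> set is \<subseteq> I \<Longrightarrow> p < n \<Longrightarrow> is ! p \<in> C \<Longrightarrow>
                 br (map e is) \<in> span (e ` C)"
    and xs: "length xs = n" "p < n" "xs ! p \<in> span (e ` C)"
  shows "br xs \<in> span (e ` C)"
proof (rule n_linear_span_args[OF nl subspace_span, where G = "\<lambda>k. if k = p then e ` C else e ` I"])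
  fix zs assume zl: "length zs = n" and zG: "\<forall>k<n. zs ! k \<in> (if k = p then e ` C else e ` I)"
  then have zI: "set zs \<subseteq> e ` I" using CI by (fastforce simp: in_set_conv_nth split: if_splits)
  define "is" where "is = map (inv_into I e) zs"
  have zs: "zs = map e is"
    unfolding is_def map_map by (rule map_idI[symmetric]) (use zI in \<open>auto simp: f_inv_into_f\<close>)
  have "zs ! p \<in> e ` C" using zG xs(2) zl by auto
  then obtain c where c: "c \<in> C" "zs ! p = e c" by blast
  then have "is ! p = c" using CI inj xs(2) zl by (simp add: is_def subset_iff)
  with c have "is ! p \<in> C" by simp
  moreover have "set is \<subseteq> I" using zI by (auto simp: is_def inv_into_into)
  moreover have "length is = n" using zl by (simp add: is_def)
  ultimately show "br zs \<in> span (e ` C)" using prod[of "is" p] xs(2) zs by simp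
next
  show "\<forall>k<n. xs ! k \<in> span (if k = p then e ` C else e ` I)"
    using xs(3) spI by (auto split: if_split)
qed (rule xs(1))

lemma graded_subspace_span_homogeneous:
  assumes Lg: "\<forall>g. subspace (Lg g)" and hom: "\<forall>i\<in>C. \<exists>g. e i \<in> Lg g"
  shows "graded_subspace scale Lg (span (e ` C))"
proof -
  let ?A = "\<lambda>g. span (e ` C) \<inter> Lg g"
  have "e i \<in> family_sums scale ?A UNIV" if i: "i \<in> C" for i
  proof -
    obtain g where "e i \<in> Lg g" using hom i by blast
    moreover have "e i \<in> span (e ` C)" using i by (simp add: span_base)
    moreover have "\<forall>g. 0 \<in> ?A g" using Lg by (simp add: span_zero subspace_0)
    ultimately show ?thesis by (intro family_sums_single[of g]) simp_all
  qed
  then have "e ` C \<subseteq> family_sums scale ?A UNIV" by (rule image_subsetI)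
  moreover have "subspace (family_sums scale ?A UNIV)"
    using Lg by (simp add: subspace_family_sums subspace_inter)
  ultimately have sums: "span (e ` C) \<subseteq> family_sums scale ?A UNIV" by (rule span_minimal)
  show ?thesis unfolding graded_subspace_def
  proof (intro conjI ballI)
    fix x assume "x \<in> span (e ` C)"
    with sums obtain f where "finite {g. f g \<noteq> 0}" "\<forall>g. f g \<in> ?A g" "x = sum f {g. f g \<noteq> 0}"
      unfolding family_sums_def by blast
    then show "\<exists>f. finite {g. f g \<noteq> 0} \<and> (\<forall>g. f g \<in> ?A g) \<and> x = sum f {g. f g \<noteq> 0}" by blast
  qed (rule subspace_span)
qed

lemma color_gLt_ideal_span:
  assumes "0 < n" and "graded_subspace scale Lg (span (e ` C))"
    and absorb: "\<And>xs p. length xs = n \<Longrightarrow> p < n \<Longrightarrow> xs ! p \<in> span (e ` C) \<Longrightarrow> br xs \<in> span (e ` C)"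
  shows "color_gLt_ideal scale Lg n br (span (e ` C))"
  unfolding color_gLt_ideal_def
proof (intro conjI allI impI)
  fix \<sigma> xs assume \<sigma>: "\<sigma> permutes {..<n}" and xs: "length xs = n \<and> xs ! 0 \<in> span (e ` C)"
  have p: "inv \<sigma> 0 < n" using permutes_in_image[OF permutes_inv[OF \<sigma>], of 0] \<open>0 < n\<close> by auto
  have len: "length (perm_args \<sigma> xs) = n" using xs by (simp add: perm_args_def)
  have "perm_args \<sigma> xs ! inv \<sigma> 0 = xs ! 0"
    using p xs by (simp add: perm_args_def permutes_inverses(1)[OF \<sigma>])
  then show "br (perm_args \<sigma> xs) \<in> span (e ` C)"
    using absorb[OF len p] xs by simp
qed fact

lemma multiplicative_basis_subset:
  assumes "homogeneous_basis scale Lg W e I" and "C \<subseteq> I" and "products_multiplicative scale n br e C"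
  shows "multiplicative_basis scale Lg n br (span (e ` C)) e C"
  using assms independent_mono[of "e ` I" "e ` C"]
  unfolding multiplicative_basis_def homogeneous_basis_def by (auto intro: inj_on_subset)

lemma class_span_ideal_multiplicative_basis:
  assumes n: "2 \<le> n" and nl: "n_linear scale n br" and Lg: "\<forall>g. subspace (Lg g)"
    and hb: "homogeneous_basis scale Lg UNIV e I" and pm: "products_multiplicative scale n br e I"
    and C: "C \<in> I // conn_rel scale n br e I {0}"
  shows "color_gLt_ideal scale Lg n br (span (e ` C)) \<and> multiplicative_basis scale Lg n br (span (e ` C)) e C"
proof
  have inj: "inj_on e I" and ind: "independent (e ` I)" and spI: "span (e ` I) = UNIV"
    and hom: "\<forall>i\<in>I. \<exists>g. e i \<in> Lg g"
    using hb unfolding homogeneous_basis_def by auto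
  have CI: "C \<subseteq> I" using in_quotient_imp_subset[OF equiv_conn_rel[OF n inj ind] C] .
  note prod = product_in_class[OF n inj ind pm C]
  have "br xs \<in> span (e ` C)" if xs: "length xs = n" "p < n" "xs ! p \<in> span (e ` C)" for xs p
  proof (rule span_absorbs_products[OF nl inj spI CI _ xs])
    fix "is" q assume "length is = n" "set is \<subseteq> I" "q < n" "is ! q \<in> C"
    from prod[OF this] obtain j c where "j \<in> C" "br (map e is) = c *s e j" by blast
    then show "br (map e is) \<in> span (e ` C)" by (simp add: span_base span_scale)
  qed
  moreover have "graded_subspace scale Lg (span (e ` C))"
    using hom CI by (intro graded_subspace_span_homogeneous[OF Lg]) blast
  ultimately show "color_gLt_ideal scale Lg n br (span (e ` C))"
    using n by (intro color_gLt_ideal_span) auto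
  have "products_multiplicative scale n br e C"
    unfolding products_multiplicative_def
  proof (intro allI impI)
    fix "is" assume h: "length is = n \<and> set is \<subseteq> C"
    then have "is ! 0 \<in> C" using n nth_mem[of 0 "is"] by fastforce
    then show "\<exists>j\<in>C. \<exists>c. br (map e is) = c *s e j" using prod[of "is" 0] h n CI by auto
  qed
  then show "multiplicative_basis scale Lg n br (span (e ` C)) e C"
    by (rule multiplicative_basis_subset[OF hb CI])
qed

end

theorem corollary3p13:
  fixes scale :: "'k::field \<Rightarrow> 'v::ab_group_add \<Rightarrow> 'v"
    and Lg :: "'g::ab_group_add \<Rightarrow> 'v set"
    and eps :: "'g \<Rightarrow> 'g \<Rightarrow> 'k"
    and n :: nat
    and br :: "'v list \<Rightarrow> 'v"
    and \<alpha> :: "nat \<Rightarrow> nat \<Rightarrow> nat \<Rightarrow> (nat \<Rightarrow> nat) \<Rightarrow> (nat \<Rightarrow> nat) \<Rightarrow> 'k"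
    and e :: "'i \<Rightarrow> 'v"
    and I :: "'i set"
  assumes alg: "color_gLt_algebra scale Lg eps n br \<alpha>"
    and basis: "multiplicative_basis scale Lg n br UNIV e I"
  shows "internal_direct_sum scale (J_class scale n br e {0}) (I // conn_rel scale n br e I {0}) UNIV \<and>
         (\<forall>C \<in> I // conn_rel scale n br e I {0}.
            color_gLt_ideal scale Lg n br (J_class scale n br e {0} C) \<and>
            multiplicative_basis scale Lg n br (J_class scale n br e {0} C) e C)"
proof -
  have n: "2 \<le> n" and "vector_space scale" and nl: "n_linear scale n br" and "graded_space scale Lg"
    using alg unfolding color_gLt_algebra_def graded_nary_algebra_def by auto
  interpret vector_space scale by fact
  have Lg: "\<forall>g. subspace (Lg g)"
    using \<open>graded_space scale Lg\<close> unfolding graded_space_def internal_direct_sum_def by auto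
  have hb: "homogeneous_basis scale Lg UNIV e I" and pm: "products_multiplicative scale n br e I"
    using basis unfolding multiplicative_basis_def by auto
  then have inj: "inj_on e I" and ind: "independent (e ` I)" and spI: "span (e ` I) = UNIV"
    unfolding homogeneous_basis_def by auto
  have eqv: "equiv I (conn_rel scale n br e I {0})" by (rule equiv_conn_rel[OF n inj ind])
  have "J_class scale n br e {0} = (\<lambda>C. span (e ` C))" by (rule ext) (rule J_class_zero_eq)
  moreover have "internal_direct_sum scale (\<lambda>C. span (e ` C)) (I // conn_rel scale n br e I {0}) UNIV"
    by (rule internal_direct_sum_span_partition[OF inj ind spI Union_quotient[OF eqv]])
      (use quotient_disj[OF eqv] in blast)
  ultimately show ?thesis
    using class_span_ideal_multiplicative_basis[OF n nl Lg hb pm] by simp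
qed

end
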